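(* Let $n,m\ge1$ and $p_{n,m}$ stable of degree $n$ in $z$ and $m$ in $w$. In $L^2\!\left(\frac{d\sigma}{|p_{n,m}|^2}\right)$, the reproducing kernel of $$\mathcal{H}=\overline{\operatorname{span}}\{z^iw^j:(0,0)\le(i,j),\ (i,j)\ngeq(n,m)\}$$ at points $(z_1,w_1)\in\mathbb{D}^2$ is $$\frac{p_{n,m}(z,w)\overline{p_{n,m}(z_1,w_1)}-\tilde p_{n,m}(z,w)\overline{\tilde p_{n,m}(z_1,w_1)}}{(1-z\bar z_1)(1-w\bar w_1)}.$$ *)

theory Defs
  imports "HOL-Analysis.Analysis"
begin

definition bipoly :: "(nat \<Rightarrow> nat \<Rightarrow> complex) \<Rightarrow> nat \<Rightarrow> nat \<Rightarrow> complex \<Rightarrow> complex \<Rightarrow> complex" where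
  "bipoly c n m z w = (\<Sum>i\<le>n. \<Sum>j\<le>m. c i j * z ^ i * w ^ j)"

text \<open>The reflection p~(z,w) = z^n w^m conj(p(1/conj z, 1/conj w)), written out as a polynomial.\<close>
definition bipoly_refl :: "(nat \<Rightarrow> nat \<Rightarrow> complex) \<Rightarrow> nat \<Rightarrow> nat \<Rightarrow> complex \<Rightarrow> complex \<Rightarrow> complex" where
  "bipoly_refl c n m z w = (\<Sum>i\<le>n. \<Sum>j\<le>m. cnj (c i j) * z ^ (n - i) * w ^ (m - j))"

definition stable2 :: "(complex \<Rightarrow> complex \<Rightarrow> complex) \<Rightarrow> bool" where
  "stable2 p \<longleftrightarrow> (\<forall>z w. cmod z \<le> 1 \<longrightarrow> cmod w \<le> 1 \<longrightarrow> p z w \<noteq> 0)"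

definition torus_measure :: "(complex \<times> complex) measure" where
  "torus_measure = distr (uniform_measure lborel ({0..2*pi} \<times> {0..2*pi}))
      borel (\<lambda>(s, t). (cis s, cis t))"

definition weighted_torus :: "(complex \<Rightarrow> complex \<Rightarrow> complex) \<Rightarrow> (complex \<times> complex) measure" where
  "weighted_torus p = density torus_measure (\<lambda>x. ennreal (1 / (cmod (p (fst x) (snd x)))\<^sup>2))"

definition idx_set :: "nat \<Rightarrow> nat \<Rightarrow> (nat \<times> nat) set" where
  "idx_set n m = {(i, j). \<not> (n \<le> i \<and> m \<le> j)}"

definition mono_comb :: "(nat \<times> nat) set \<Rightarrow> (nat \<times> nat \<Rightarrow> complex) \<Rightarrow> complex \<times> complex \<Rightarrow> complex" where
  "mono_comb F a x = (\<Sum>(i, j)\<in>F. a (i, j) * fst x ^ i * snd x ^ j)"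

end

theory Submission
  imports Defs "HOL-Computational_Algebra.Fundamental_Theorem_Algebra"
begin

(*
  1. Functions with absolutely summable Taylor series on the closed disc (wiener) include the
     rational functions without poles there; for them Cauchy's formula on the unit circle is
     proved by termwise integration.  Torus integrals are iterated circle integrals (Fubini).
  2. Reducing each monomial modulo 1 - conj z1 z and 1 - conj w1 w leaves multiples of z^n w^m,
     which cancel in the numerator of K.  So K = A/(1 - conj w1 w) + B/(1 - conj z1 z) with
     polynomials A, B, and truncated geometric series give uniform approximations from H.
  3. On the torus f conj(K) / |p|^2 is p(z1,w1) f / (p (1 - conj z z1)(1 - conj w w1)), which
     integrates to f(z1,w1) by Cauchy's formula, minus a sum of terms
     conj(z^i w^j) z^n w^m / (...) with (i, j) in the index set, each integrating to zero.
*)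

section \<open>Functions with absolutely summable Taylor series on the closed disc\<close>

(* h is, on the closed unit disc, the sum of a power series with absolutely summable
   coefficients.  Cauchy's formula is proved for this class by termwise integration. *)
definition wiener :: "(complex \<Rightarrow> complex) \<Rightarrow> bool" where
  "wiener h \<longleftrightarrow> (\<exists>b. summable (\<lambda>k. norm (b k)) \<and>
                   (\<forall>z. cmod z \<le> 1 \<longrightarrow> (\<lambda>k. b k * z ^ k) sums h z))"

lemma norm_coeff_power_le: "cmod z \<le> 1 \<Longrightarrow> norm (b * z ^ k) \<le> norm b"
  by (simp add: norm_mult norm_power mult_left_le power_le_one)

lemma norm_power_series_le:
  assumes "summable (\<lambda>k. norm (b k))" "cmod z \<le> 1" "(\<lambda>k. b k * z ^ k) sums h"
  shows "norm h \<le> (\<Sum>k. norm (b k))"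
proof -
  have sz: "summable (\<lambda>k. norm (b k * z ^ k))"
    by (rule summable_comparison_test[OF _ assms(1)]) (auto intro!: exI[of _ 0] norm_coeff_power_le assms(2))
  have "norm h \<le> (\<Sum>k. norm (b k * z ^ k))"
    using summable_norm[OF sz] sums_unique[OF assms(3)] by simp
  also have "\<dots> \<le> (\<Sum>k. norm (b k))"
    by (rule suminf_le[OF _ sz assms(1)]) (use norm_coeff_power_le[OF assms(2)] in auto)
  finally show ?thesis .
qed

lemma wiener_const: "wiener (\<lambda>z. c)"
  unfolding wiener_def
proof (intro exI[of _ "\<lambda>k. if k = 0 then c else 0"] conjI allI impI)
  show "summable (\<lambda>k. norm (if k = 0 then c else 0))"
    by (rule summable_finite[of "{0}"]) auto
  fix z :: complex
  have "(\<lambda>k. (if k = 0 then c else 0) * z ^ k) = (\<lambda>k. if k = 0 then c else 0)" by auto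
  then show "(\<lambda>k. (if k = 0 then c else 0) * z ^ k) sums c"
    using sums_single[of 0 "\<lambda>_. c"] by simp
qed

lemma wiener_id: "wiener (\<lambda>z. z)"
  unfolding wiener_def
proof (intro exI[of _ "\<lambda>k. if k = 1 then 1 else 0"] conjI allI impI)
  show "summable (\<lambda>k. norm (if k = 1 then 1 else (0::complex)))"
    by (rule summable_finite[of "{1}"]) auto
  fix z :: complex
  have "(\<lambda>k. (if k = 1 then 1 else 0) * z ^ k) = (\<lambda>k. if k = 1 then z else 0)" by auto
  then show "(\<lambda>k. (if k = 1 then 1 else 0) * z ^ k) sums z"
    using sums_single[of 1 "\<lambda>_. z"] by simp
qed

lemma wiener_add:
  assumes "wiener f" "wiener g"
  shows "wiener (\<lambda>z. f z + g z)"
proof -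
  obtain a b where a: "summable (\<lambda>k. norm (a k))" "\<And>z. cmod z \<le> 1 \<Longrightarrow> (\<lambda>k. a k * z ^ k) sums f z"
    and b: "summable (\<lambda>k. norm (b k))" "\<And>z. cmod z \<le> 1 \<Longrightarrow> (\<lambda>k. b k * z ^ k) sums g z"
    using assms unfolding wiener_def by blast
  define c where "c k = a k + b k" for k
  have "summable (\<lambda>k. norm (c k))" unfolding c_def
    by (rule summable_comparison_test[OF _ summable_add[OF a(1) b(1)]]) (auto intro: norm_triangle_ineq)
  moreover have "(\<lambda>k. c k * z ^ k) sums (f z + g z)" if "cmod z \<le> 1" for z
    using sums_add[OF a(2)[OF that] b(2)[OF that]] by (simp add: c_def distrib_right)
  ultimately show ?thesis unfolding wiener_def by blast
qed

(* Closure under products: the Cauchy product of absolutely convergent series. *)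
lemma wiener_mult:
  assumes "wiener f" "wiener g"
  shows "wiener (\<lambda>z. f z * g z)"
proof -
  obtain a b where a: "summable (\<lambda>k. norm (a k))" "\<And>z. cmod z \<le> 1 \<Longrightarrow> (\<lambda>k. a k * z ^ k) sums f z"
    and b: "summable (\<lambda>k. norm (b k))" "\<And>z. cmod z \<le> 1 \<Longrightarrow> (\<lambda>k. b k * z ^ k) sums g z"
    using assms unfolding wiener_def by blast
  define c where "c k = (\<Sum>i\<le>k. a i * b (k - i))" for k
  have "summable (\<lambda>k. \<Sum>i\<le>k. norm (a i) * norm (b (k - i)))"
    using Cauchy_product_sums[of "\<lambda>k. norm (a k)" "\<lambda>k. norm (b k)"] a b sums_summable by auto
  then have "summable (\<lambda>k. norm (c k))"
    unfolding c_def by (rule summable_comparison_test[rotated])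
      (auto intro!: exI[of _ 0] order.trans[OF norm_sum] simp: norm_mult)
  moreover have "(\<lambda>k. c k * z ^ k) sums (f z * g z)" if z: "cmod z \<le> 1" for z
  proof -
    have sa: "summable (\<lambda>k. norm (a k * z ^ k))" and sb: "summable (\<lambda>k. norm (b k * z ^ k))"
      by (rule summable_comparison_test[OF _ a(1)] summable_comparison_test[OF _ b(1)],
          auto intro!: exI[of _ 0] norm_coeff_power_le z)+
    have prod: "(\<Sum>i\<le>k. (a i * z ^ i) * (b (k - i) * z ^ (k - i))) = c k * z ^ k" for k
    proof -
      have "(\<Sum>i\<le>k. (a i * z ^ i) * (b (k - i) * z ^ (k - i))) = (\<Sum>i\<le>k. (a i * b (k - i)) * z ^ k)"
        by (intro sum.cong refl) (simp add: power_add[symmetric] mult_ac)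
      then show ?thesis by (simp add: c_def sum_distrib_right)
    qed
    have "(\<lambda>k. \<Sum>i\<le>k. (a i * z ^ i) * (b (k - i) * z ^ (k - i))) sums ((\<Sum>k. a k * z ^ k) * (\<Sum>k. b k * z ^ k))"
      by (rule Cauchy_product_sums[OF sa sb])
    moreover have "(\<Sum>k. a k * z ^ k) = f z" "(\<Sum>k. b k * z ^ k) = g z"
      using a(2)[OF z] b(2)[OF z] sums_unique by metis+
    ultimately show ?thesis by (simp only: prod)
  qed
  ultimately show ?thesis unfolding wiener_def by blast
qed

lemma wiener_power: "wiener f \<Longrightarrow> wiener (\<lambda>z. f z ^ k)"
  by (induction k) (auto intro: wiener_const wiener_mult)

(* 1/(z - r) for a pole r outside the closed disc: a geometric series in z/r. *)
lemma wiener_inverse_linear: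
  assumes r: "cmod r > 1"
  shows "wiener (\<lambda>z. 1 / (z - r))"
  unfolding wiener_def
proof (intro exI[of _ "\<lambda>k. - ((1 / r) ^ Suc k)"] conjI allI impI)
  have "norm (1 / r) < 1" using r by (simp add: norm_divide divide_less_eq)
  then have "summable (\<lambda>k. norm (1 / r) ^ Suc k)"
    by (subst summable_Suc_iff) (intro summable_geometric, simp)
  then show "summable (\<lambda>k. norm (- ((1 / r) ^ Suc k)))"
    by (simp add: norm_power norm_mult del: power_Suc)
  fix z :: complex assume z: "cmod z \<le> 1"
  have "norm (z / r) < 1" using z r by (simp add: norm_divide divide_less_eq)
  then have "(\<lambda>k. (- (1 / r)) * (z / r) ^ k) sums (- (1 / r) * (1 / (1 - z / r)))"
    by (intro sums_mult geometric_sums)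
  moreover have "- (1 / r) * (1 / (1 - z / r)) = 1 / (z - r)"
  proof -
    have "z - r \<noteq> 0" "r \<noteq> 0" using z r by auto
    then show ?thesis by (simp add: field_simps)
  qed
  moreover have "(\<lambda>k. (- (1 / r)) * (z / r) ^ k) = (\<lambda>k. - ((1 / r) ^ Suc k) * z ^ k)"
    by (auto simp: power_divide field_simps)
  ultimately show "(\<lambda>k. - ((1 / r) ^ Suc k) * z ^ k) sums (1 / (z - r))" by simp
qed

lemma wiener_poly: "wiener (poly p)"
proof (induction p)
  case 0
  then show ?case using wiener_const[of 0] by (simp add: fun_eq_iff)
next
  case (pCons a p)
  have "wiener (\<lambda>z. a + z * poly p z)"
    by (intro wiener_add wiener_const wiener_mult wiener_id pCons.IH)
  then show ?case by (simp add: fun_eq_iff)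
qed

(* The reciprocal of a polynomial without zeros on the closed disc: factor off one root
   (it lies outside the disc) and induct on the degree. *)
lemma wiener_inverse_poly:
  fixes q :: "complex poly"
  assumes "\<And>z. cmod z \<le> 1 \<Longrightarrow> poly q z \<noteq> 0"
  shows "wiener (\<lambda>z. 1 / poly q z)"
  using assms
proof (induction "degree q" arbitrary: q rule: less_induct)
  case less
  show ?case
  proof (cases "degree q = 0")
    case True
    then obtain c where "q = [:c:]" by (metis degree_eq_zeroE)
    then show ?thesis using wiener_const[of "1 / c"] by simp
  next
    case False
    then have "\<not> constant (poly q)" by (simp add: constant_degree)
    then obtain r where r: "poly q r = 0" using fundamental_theorem_of_algebra by blast
    then have r1: "cmod r > 1" using less.prems by force
    from r obtain q' where q: "q = [:-r, 1:] * q'" by (metis poly_eq_0_iff_dvd dvdE)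
    have "q' \<noteq> 0" using q False by auto
    then have deg: "degree q' < degree q" by (subst q, subst degree_mult_eq) auto
    have pq: "\<And>z. poly q z = (z - r) * poly q' z" by (subst q) (simp add: algebra_simps)
    have "wiener (\<lambda>z. 1 / poly q' z)" using less.hyps[OF deg] less.prems pq by auto
    then have "wiener (\<lambda>z. 1 / (z - r) * (1 / poly q' z))"
      by (intro wiener_mult wiener_inverse_linear r1)
    then show ?thesis by (simp add: pq)
  qed
qed

definition poly_fun :: "(complex \<Rightarrow> complex) \<Rightarrow> bool" where
  "poly_fun f \<longleftrightarrow> (\<exists>q. \<forall>z. f z = poly q z)"

lemma poly_fun_const: "poly_fun (\<lambda>z. c)"
  unfolding poly_fun_def by (intro exI[of _ "[:c:]"]) auto

lemma poly_fun_id: "poly_fun (\<lambda>z. z)"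
  unfolding poly_fun_def by (intro exI[of _ "[:0, 1:]"]) auto

lemma poly_fun_add: "poly_fun f \<Longrightarrow> poly_fun g \<Longrightarrow> poly_fun (\<lambda>z. f z + g z)"
  unfolding poly_fun_def by (metis poly_add)

lemma poly_fun_mult: "poly_fun f \<Longrightarrow> poly_fun g \<Longrightarrow> poly_fun (\<lambda>z. f z * g z)"
  unfolding poly_fun_def by (metis poly_mult)

lemma poly_fun_diff: "poly_fun f \<Longrightarrow> poly_fun g \<Longrightarrow> poly_fun (\<lambda>z. f z - g z)"
  unfolding poly_fun_def by (metis poly_diff)

lemma poly_fun_power: "poly_fun f \<Longrightarrow> poly_fun (\<lambda>z. f z ^ k)"
  unfolding poly_fun_def by (metis poly_power)

lemma poly_fun_sum: "(\<And>k. k \<in> A \<Longrightarrow> poly_fun (f k)) \<Longrightarrow> poly_fun (\<lambda>z. \<Sum>k\<in>A. f k z)"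
  by (induction A rule: infinite_finite_induct) (auto intro: poly_fun_const poly_fun_add)

lemma wiener_rational:
  assumes "poly_fun f" "poly_fun g" "\<And>z. cmod z \<le> 1 \<Longrightarrow> g z \<noteq> 0"
  shows "wiener (\<lambda>z. f z / g z)"
proof -
  obtain p q where "f = poly p" "g = poly q" using assms(1,2) unfolding poly_fun_def by blast
  then show ?thesis
    using wiener_mult[OF wiener_poly wiener_inverse_poly, of q p] assms(3) by simp
qed

section \<open>Integrals over the unit circle\<close>

(* The integral of f over one period [0, 2 pi]; circle integrals are written as
   integrals of functions of the angle s, evaluated at cis s. *)
definition circ_integral :: "(real \<Rightarrow> complex) \<Rightarrow> complex" where
  "circ_integral f = integral\<^sup>L lborel (\<lambda>s. indicator {0..2*pi} s *\<^sub>R f s)"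

lemma circ_integrable_bounded:
  fixes f :: "real \<Rightarrow> complex"
  assumes "f \<in> borel_measurable borel" "\<And>s. norm (f s) \<le> B"
  shows "integrable lborel (\<lambda>s. indicator {0..2*pi} s *\<^sub>R f s)"
proof (rule Bochner_Integration.integrable_bound[where f="\<lambda>s. indicator {0..2*pi} s *\<^sub>R (B::real)"])
  show "integrable lborel (\<lambda>s. indicator {0..2*pi} s *\<^sub>R (B::real))"
    by (rule borel_integrable_compact) (auto intro: continuous_intros)
  show "(\<lambda>s. indicator {0..2*pi} s *\<^sub>R f s) \<in> borel_measurable lborel"
    using assms(1) by measurable
  show "AE x in lborel. norm (indicator {0..2 * pi} x *\<^sub>R f x) \<le> norm (indicator {0..2 * pi} x *\<^sub>R B)"
    using assms(2) order_trans[OF norm_ge_zero assms(2)] by (auto simp: indicator_def)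
qed

lemma circ_integral_cmult: "circ_integral (\<lambda>s. c * f s) = c * circ_integral f"
proof -
  have "(\<lambda>s. indicator {0..2*pi} s *\<^sub>R (c * f s)) = (\<lambda>s. c * (indicator {0..2*pi} s *\<^sub>R f s))"
    by (simp add: fun_eq_iff)
  then show ?thesis unfolding circ_integral_def by (simp only: integral_mult_right_zero)
qed

lemma circ_integral_sums:
  fixes g :: "nat \<Rightarrow> real \<Rightarrow> complex"
  assumes meas: "\<And>j. g j \<in> borel_measurable borel"
    and sums: "\<And>s. (\<lambda>j. g j s) sums G s"
    and bound: "\<And>j s. norm (g j s) \<le> M j" and summable: "summable M"
  shows "(\<lambda>j. circ_integral (g j)) sums circ_integral G"
proof -
  have M0: "\<And>j. 0 \<le> M j" using bound order_trans[OF norm_ge_zero] by blast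
  have Gm: "G \<in> borel_measurable borel"
    by (rule borel_measurable_LIMSEQ_metric[of "\<lambda>N s. \<Sum>j<N. g j s"])
       (use meas sums in \<open>auto simp: sums_def\<close>)
  have int: "\<And>j. integrable lborel (\<lambda>s. indicator {0..2*pi} s *\<^sub>R g j s)"
    by (rule circ_integrable_bounded[OF meas bound])
  have partial: "(\<Sum>j<N. circ_integral (g j))
      = integral\<^sup>L lborel (\<lambda>s. indicator {0..2*pi} s *\<^sub>R (\<Sum>j<N. g j s))" for N
    unfolding circ_integral_def scaleR_sum_right
    by (rule Bochner_Integration.integral_sum[symmetric]) (use int in auto)
  have "(\<lambda>N. integral\<^sup>L lborel (\<lambda>s. indicator {0..2*pi} s *\<^sub>R (\<Sum>j<N. g j s))) \<longlonglongrightarrow> circ_integral G"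
    unfolding circ_integral_def
  proof (rule integral_dominated_convergence[where w="\<lambda>s. indicator {0..2*pi} s *\<^sub>R suminf M"])
    show "(\<lambda>s. indicator {0..2*pi} s *\<^sub>R G s) \<in> borel_measurable lborel" using Gm by measurable
    show "(\<lambda>s. indicator {0..2*pi} s *\<^sub>R (\<Sum>j<N. g j s)) \<in> borel_measurable lborel" for N
      using meas by measurable
    show "integrable lborel (\<lambda>s. indicator {0..2*pi} s *\<^sub>R suminf M)"
      by (rule borel_integrable_compact) (auto intro: continuous_intros)
    show "AE s in lborel. (\<lambda>N. indicator {0..2*pi} s *\<^sub>R (\<Sum>j<N. g j s)) \<longlonglongrightarrow> indicator {0..2*pi} s *\<^sub>R G s"
      using sums by (auto simp: sums_def intro!: tendsto_scaleR)
    show "AE s in lborel. norm (indicator {0..2*pi} s *\<^sub>R (\<Sum>j<N. g j s)) \<le> indicator {0..2*pi} s *\<^sub>R suminf M" for N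
    proof (intro AE_I2)
      fix s
      have "norm (\<Sum>j<N. g j s) \<le> (\<Sum>j<N. M j)"
        by (rule order_trans[OF norm_sum sum_mono[OF bound]])
      also have "\<dots> \<le> suminf M" by (rule sum_le_suminf[OF summable]) (use M0 in auto)
      finally show "norm (indicator {0..2*pi} s *\<^sub>R (\<Sum>j<N. g j s)) \<le> indicator {0..2*pi} s *\<^sub>R suminf M"
        by (auto simp: indicator_def)
    qed
  qed
  then show ?thesis unfolding sums_def partial .
qed

lemma circ_integral_character:
  fixes d :: int
  shows "circ_integral (\<lambda>s. cis (of_int d * s)) = (if d = 0 then 2 * pi else 0)"
proof (cases "d = 0")
  case True
  have "circ_integral (\<lambda>s. cis (of_int d * s)) = complex_of_real (2 * pi) - complex_of_real 0"
    unfolding circ_integral_def using True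
    by (intro integral_FTC_atLeastAtMost) (auto intro!: derivative_eq_intros continuous_intros)
  then show ?thesis using True by simp
next
  case False
  define c where "c = 1 / (\<i> * of_int d)"
  have "circ_integral (\<lambda>s. cis (of_int d * s)) = cis (of_int d * (2*pi)) * c - cis (of_int d * 0) * c"
    unfolding circ_integral_def
  proof (rule integral_FTC_atLeastAtMost)
    show "continuous_on {0..2 * pi} (\<lambda>s. cis (of_int d * s))" by (intro continuous_intros)
    fix x :: real
    have "((\<lambda>s. cis (of_int d * s) * c) has_derivative (\<lambda>t. (t * of_int d) *\<^sub>R (\<i> * cis (of_int d * x)) * c)) (at x within {0..2*pi})"
      by (intro derivative_eq_intros has_derivative_cis) auto
    moreover have "(\<lambda>t. (t * of_int d) *\<^sub>R (\<i> * cis (of_int d * x)) * c) = (\<lambda>t. t *\<^sub>R cis (of_int d * x))"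
      using False by (auto simp: c_def fun_eq_iff scaleR_conv_of_real field_simps)
    ultimately show "((\<lambda>s. cis (of_int d * s) * c) has_vector_derivative cis (of_int d * x)) (at x within {0..2 * pi})"
      unfolding has_vector_derivative_def by simp
  qed simp
  also have "cis (of_int d * (2*pi)) = 1"
    using cis_multiple_2pi[of "of_int d"] by (simp add: mult_ac)
  finally show ?thesis using False by simp
qed

lemma circ_integral_monomial:
  "circ_integral (\<lambda>s. cis s ^ j * cnj (cis s) ^ k) = (if j = k then 2 * pi else 0)"
proof -
  have "cis s ^ j * cnj (cis s) ^ k = cis (of_int (int j - int k) * s)" for s
  proof -
    have "cis s ^ j = cis (real j * s)" "cnj (cis s) ^ k = cis (real k * (- s))"
      unfolding cis_cnj by (rule Complex.DeMoivre)+
    then show ?thesis by (simp add: cis_mult algebra_simps)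
  qed
  then show ?thesis using circ_integral_character[of "int j - int k"] by simp
qed

lemma power_series_circle_measurable:
  fixes b :: "nat \<Rightarrow> complex" and h :: "complex \<Rightarrow> complex"
  assumes "\<And>s. (\<lambda>k. b k * cis s ^ k) sums h (cis s)"
  shows "(\<lambda>s. h (cis s)) \<in> borel_measurable borel"
  by (rule borel_measurable_LIMSEQ_metric[of "\<lambda>N s. \<Sum>k<N. b k * cis s ^ k"])
     (use assms in \<open>auto intro!: borel_measurable_continuous_onI continuous_intros simp: sums_def\<close>)

lemma circ_integral_taylor_coeff:
  fixes b :: "nat \<Rightarrow> complex" and h :: "complex \<Rightarrow> complex"
  assumes summable: "summable (\<lambda>k. norm (b k))"
    and sums: "\<And>s. (\<lambda>j. b j * cis s ^ j) sums h (cis s)"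
  shows "circ_integral (\<lambda>s. h (cis s) * cnj (cis s) ^ k) = 2 * pi * b k"
proof -
  have "(\<lambda>j. circ_integral (\<lambda>s. b j * (cis s ^ j * cnj (cis s) ^ k)))
      sums circ_integral (\<lambda>s. h (cis s) * cnj (cis s) ^ k)"
  proof (rule circ_integral_sums[where M="\<lambda>j. norm (b j)"])
    show "(\<lambda>s. b j * (cis s ^ j * cnj (cis s) ^ k)) \<in> borel_measurable borel" for j
      by (auto intro!: borel_measurable_continuous_onI continuous_intros)
    show "(\<lambda>j. b j * (cis s ^ j * cnj (cis s) ^ k)) sums (h (cis s) * cnj (cis s) ^ k)" for s
      using sums_mult2[OF sums] by (simp add: mult.assoc)
    show "norm (b j * (cis s ^ j * cnj (cis s) ^ k)) \<le> norm (b j)" for j s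
      by (simp add: norm_mult norm_power)
  qed (rule summable)
  moreover have "(\<lambda>j. circ_integral (\<lambda>s. b j * (cis s ^ j * cnj (cis s) ^ k)))
      = (\<lambda>j. if j = k then 2 * pi * b k else 0)"
    by (simp add: circ_integral_cmult circ_integral_monomial fun_eq_iff)
  ultimately show ?thesis using sums_single[of k "\<lambda>_. 2 * pi * b k"] sums_unique2 by auto
qed

(* Cauchy's integral formula on the unit circle for the Wiener class:
   h(a) = (1/2 pi) \<integral> h(e^{is}) / (1 - e^{-is} a) ds for |a| < 1.
   Expand 1/(1 - e^{-is} a) geometrically and integrate termwise. *)
theorem circ_integral_cauchy:
  fixes h :: "complex \<Rightarrow> complex"
  assumes "wiener h" "cmod a < 1"
  shows "circ_integral (\<lambda>s. h (cis s) / (1 - cnj (cis s) * a)) = 2 * pi * h a"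
proof -
  obtain b where bs: "summable (\<lambda>k. norm (b k))"
    and hs: "\<And>z. cmod z \<le> 1 \<Longrightarrow> (\<lambda>k. b k * z ^ k) sums h z"
    using assms(1) unfolding wiener_def by blast
  define H where "H = (\<Sum>k. norm (b k))"
  have hs_circle: "(\<lambda>k. b k * cis s ^ k) sums h (cis s)" for s by (rule hs) simp
  have hb: "norm (h (cis s)) \<le> H" for s
    unfolding H_def by (rule norm_power_series_le[OF bs _ hs_circle]) simp
  have hmeas: "(\<lambda>s. h (cis s)) \<in> borel_measurable borel"
    by (rule power_series_circle_measurable[OF hs_circle])
  have "(\<lambda>k. circ_integral (\<lambda>s. a ^ k * (h (cis s) * cnj (cis s) ^ k)))
      sums circ_integral (\<lambda>s. h (cis s) / (1 - cnj (cis s) * a))"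
  proof (rule circ_integral_sums[where M="\<lambda>k. H * norm a ^ k"])
    show "(\<lambda>s. a ^ k * (h (cis s) * cnj (cis s) ^ k)) \<in> borel_measurable borel" for k
    proof -
      have "(\<lambda>s. a ^ k * cnj (cis s) ^ k) \<in> borel_measurable borel"
        by (auto intro!: borel_measurable_continuous_onI continuous_intros)
      from borel_measurable_times[OF hmeas this] show ?thesis by (simp add: mult_ac)
    qed
    show "(\<lambda>k. a ^ k * (h (cis s) * cnj (cis s) ^ k)) sums (h (cis s) / (1 - cnj (cis s) * a))" for s
    proof -
      have "norm (cnj (cis s) * a) < 1" using assms(2) by (simp add: norm_mult)
      then have "(\<lambda>k. h (cis s) * (cnj (cis s) * a) ^ k) sums (h (cis s) * (1 / (1 - cnj (cis s) * a)))"
        by (intro sums_mult geometric_sums)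
      then show ?thesis by (simp add: power_mult_distrib mult_ac)
    qed
    show "norm (a ^ k * (h (cis s) * cnj (cis s) ^ k)) \<le> H * norm a ^ k" for k s
      using hb[of s] by (simp add: norm_mult norm_power mult.commute[of H] mult_left_mono)
    show "summable (\<lambda>k. H * norm a ^ k)"
      by (intro summable_mult summable_geometric) (use assms(2) in simp)
  qed
  moreover have "circ_integral (\<lambda>s. a ^ k * (h (cis s) * cnj (cis s) ^ k)) = 2 * pi * (b k * a ^ k)" for k
    by (simp add: circ_integral_cmult circ_integral_taylor_coeff[OF bs hs_circle])
  moreover have "(\<lambda>k. 2 * pi * (b k * a ^ k)) sums (2 * pi * h a)"
    by (rule sums_mult[OF hs]) (use assms(2) in simp)
  ultimately show ?thesis using sums_unique2 by simp
qed

corollary circ_integral_cis_times_vanishes: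
  assumes "wiener h"
  shows "circ_integral (\<lambda>s. cis s * h (cis s)) = 0"
  using circ_integral_cauchy[OF wiener_mult[OF wiener_id assms], of 0] by simp

(* For i < n the factor conj(e^{is})^i e^{ins} = e^{is} e^{i(n-i-1)s} still has a positive
   power, so the integral vanishes. *)
lemma circ_integral_conj_power_vanishes:
  assumes "i < n" "wiener h"
  shows "circ_integral (\<lambda>s. cnj (cis s) ^ i * cis s ^ n * h (cis s)) = 0"
proof -
  have shift: "cnj (cis s) ^ i * cis s ^ n = cis s * cis s ^ (n - Suc i)" for s
  proof -
    have "cnj (cis s) ^ i * cis s ^ n = (cnj (cis s) * cis s) ^ i * cis s ^ (n - i)"
      using assms(1) by (simp add: power_mult_distrib mult_ac flip: power_add)
    also have "\<dots> = cis s * cis s ^ (n - Suc i)"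
      using assms(1) by (simp add: cis_cnj cis_mult Suc_diff_Suc flip: power_Suc)
    finally show ?thesis .
  qed
  have "wiener (\<lambda>z. z ^ (n - Suc i) * h z)"
    by (intro wiener_mult assms(2) wiener_power wiener_id)
  from circ_integral_cis_times_vanishes[OF this] show ?thesis
    by (simp add: shift mult.assoc)
qed

lemma circ_integral_cauchy2:
  fixes h :: "complex \<Rightarrow> complex \<Rightarrow> complex"
  assumes "\<And>w. cmod w = 1 \<Longrightarrow> wiener (\<lambda>z. h z w)" "wiener (\<lambda>w. h a w)"
    and "cmod a < 1" "cmod b < 1"
  shows "circ_integral (\<lambda>t. circ_integral (\<lambda>s. h (cis s) (cis t)
            / ((1 - cnj (cis s) * a) * (1 - cnj (cis t) * b)))) = 2 * pi * (2 * pi * h a b)"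
proof -
  have inner: "circ_integral (\<lambda>s. h (cis s) w / ((1 - cnj (cis s) * a) * (1 - cnj w * b)))
      = 2 * pi * (h a w / (1 - cnj w * b))" if w: "cmod w = 1" for w
  proof -
    have "wiener (\<lambda>z. h z w * (1 / (1 - cnj w * b)))"
      by (intro wiener_mult wiener_const assms(1) w)
    from circ_integral_cauchy[OF this assms(3)] show ?thesis
      by (simp add: mult_ac)
  qed
  have "circ_integral (\<lambda>t. circ_integral (\<lambda>s. h (cis s) (cis t)
            / ((1 - cnj (cis s) * a) * (1 - cnj (cis t) * b))))
      = circ_integral (\<lambda>t. 2 * pi * (h a (cis t) / (1 - cnj (cis t) * b)))"
    by (simp add: inner)
  also have "\<dots> = 2 * pi * (2 * pi * h a b)"
    by (simp only: circ_integral_cmult circ_integral_cauchy[OF assms(2,4)])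
  finally show ?thesis .
qed

section \<open>The torus measure and Fubini's theorem\<close>

abbreviation angle_square :: "(real \<times> real) set" where
  "angle_square \<equiv> {0..2*pi} \<times> {0..2*pi}"

lemma emeasure_angle_square: "emeasure lborel angle_square = ennreal (4 * pi\<^sup>2)"
proof -
  have "emeasure (lborel \<Otimes>\<^sub>M lborel) angle_square
      = emeasure lborel {0..2*pi::real} * emeasure lborel {0..2*pi::real}"
    by (rule lborel.emeasure_pair_measure_Times) auto
  also have "\<dots> = ennreal (4 * pi\<^sup>2)"
    by (simp add: ennreal_mult[symmetric] power2_eq_square)
  finally show ?thesis by (simp add: lborel_prod)
qed

lemma uniform_angle_square_density:
  "uniform_measure lborel angle_square
     = density lborel (\<lambda>x. ennreal (indicator angle_square x / (4 * pi\<^sup>2)))"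
  unfolding uniform_measure_def emeasure_angle_square
proof (intro arg_cong[where f="density lborel"] ext)
  fix x :: "real \<times> real"
  show "indicator angle_square x / ennreal (4 * pi\<^sup>2) = ennreal (indicator angle_square x / (4 * pi\<^sup>2))"
    by (cases "x \<in> angle_square") (auto simp: divide_ennreal[symmetric])
qed

lemma uniform_angle_square_space:
  "emeasure (uniform_measure lborel angle_square) (space (uniform_measure lborel angle_square)) = 1"
proof -
  have "angle_square \<in> sets lborel" by (simp add: borel_closed closed_Times)
  then have "emeasure (uniform_measure lborel angle_square) UNIV
      = emeasure lborel (angle_square \<inter> UNIV) / emeasure lborel angle_square"
    by (intro emeasure_uniform_measure) auto
  also have "\<dots> = 1" by (simp add: emeasure_angle_square)
  finally show ?thesis by simp
qed

lemma torus_param_measurable: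
  "(\<lambda>(s, t). (cis s, cis t)) \<in> measurable (uniform_measure lborel angle_square) borel"
proof -
  have "(\<lambda>(s, t). (cis s, cis t)) \<in> borel_measurable (borel :: (real \<times> real) measure)"
    by (rule borel_measurable_continuous_onI) (auto intro!: continuous_intros simp: case_prod_unfold)
  then show ?thesis by (simp add: measurable_cong_sets[OF sets_uniform_measure refl])
qed

lemma torus_integral:
  fixes g :: "complex \<times> complex \<Rightarrow> complex"
  assumes gm: "g \<in> borel_measurable borel"
    and gc: "continuous_on UNIV (\<lambda>x. g (cis (fst x), cis (snd x)))"
  shows torus_integrable: "integrable torus_measure g"
    and torus_integral_iterated:
      "integral\<^sup>L torus_measure g = circ_integral (\<lambda>s. circ_integral (\<lambda>t. g (cis s, cis t))) / (4 * pi\<^sup>2)"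
    and torus_integral_iterated':
      "integral\<^sup>L torus_measure g = circ_integral (\<lambda>t. circ_integral (\<lambda>s. g (cis s, cis t))) / (4 * pi\<^sup>2)"
proof -
  let ?F = "\<lambda>x::real\<times>real. indicator angle_square x *\<^sub>R g (cis (fst x), cis (snd x))"
  have intF: "integrable lborel ?F"
    by (rule borel_integrable_compact) (auto intro!: compact_Times continuous_on_subset[OF gc])
  have meas: "(\<lambda>x::real\<times>real. g (cis (fst x), cis (snd x))) \<in> borel_measurable borel"
    using borel_measurable_continuous_onI[OF gc] by simp
  have ind: "(\<lambda>x. indicator angle_square x / (4 * pi\<^sup>2)) \<in> borel_measurable borel"
    by (intro borel_measurable_divide borel_measurable_indicator) (auto intro: borel_closed closed_Times)
  have pull_back: "integral\<^sup>L torus_measure g = integral\<^sup>L lborel ?F / (4 * pi\<^sup>2)"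
  proof -
    have "integral\<^sup>L torus_measure g
        = integral\<^sup>L (uniform_measure lborel angle_square) (\<lambda>x. g (case x of (s, t) \<Rightarrow> (cis s, cis t)))"
      unfolding torus_measure_def by (rule integral_distr[OF torus_param_measurable gm])
    also have "\<dots> = integral\<^sup>L lborel (\<lambda>x. (indicator angle_square x / (4 * pi\<^sup>2)) *\<^sub>R g (cis (fst x), cis (snd x)))"
      unfolding uniform_angle_square_density
      by (subst integral_density) (auto simp: case_prod_unfold meas ind)
    also have "\<dots> = integral\<^sup>L lborel (\<lambda>x. (1 / (4 * pi\<^sup>2)) *\<^sub>R ?F x)"
      by (intro arg_cong[where f="integral\<^sup>L lborel"] ext) simp
    also have "\<dots> = integral\<^sup>L lborel ?F / (4 * pi\<^sup>2)"
      by (simp only: integral_scaleR_right) (simp add: scaleR_conv_of_real)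
    finally show ?thesis .
  qed
  show "integrable torus_measure g"
    unfolding torus_measure_def
  proof (subst integrable_distr_eq[OF torus_param_measurable gm])
    show "integrable (uniform_measure lborel angle_square) (\<lambda>x. g (case x of (s, t) \<Rightarrow> (cis s, cis t)))"
      unfolding uniform_angle_square_density
      using integrable_scaleR_right[OF intF, of "1 / (4 * pi\<^sup>2)"]
      by (subst integrable_density) (auto simp: case_prod_unfold meas ind)
  qed
  have product: "integral\<^sup>L lborel ?F = integral\<^sup>L (lborel \<Otimes>\<^sub>M lborel)
      (\<lambda>(s, t). indicator {0..2*pi} s *\<^sub>R (indicator {0..2*pi} t *\<^sub>R g (cis s, cis t)))"
    and intF': "integrable (lborel \<Otimes>\<^sub>M lborel)
      (\<lambda>(s, t). indicator {0..2*pi} s *\<^sub>R (indicator {0..2*pi} t *\<^sub>R g (cis s, cis t)))"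
    using intF by (simp_all add: lborel_prod case_prod_unfold indicator_times)
  show "integral\<^sup>L torus_measure g = circ_integral (\<lambda>s. circ_integral (\<lambda>t. g (cis s, cis t))) / (4 * pi\<^sup>2)"
    unfolding pull_back product lborel_pair.integral_fst[OF intF', symmetric] circ_integral_def
    by (simp only: integral_scaleR_right)
  show "integral\<^sup>L torus_measure g = circ_integral (\<lambda>t. circ_integral (\<lambda>s. g (cis s, cis t))) / (4 * pi\<^sup>2)"
    unfolding pull_back product lborel_pair.integral_snd[OF intF', symmetric] circ_integral_def
    by (simp only: scaleR_left_commute[of "indicator {0..2*pi} _" "indicator {0..2*pi} _"] integral_scaleR_right)
qed

lemma borel_measurable_cnj [measurable]:
  "f \<in> borel_measurable M \<Longrightarrow> (\<lambda>x. cnj (f x)) \<in> borel_measurable M"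
  using measurable_compose[OF _ borel_measurable_continuous_onI[OF continuous_on_cnj[OF continuous_on_id]]]
  by blast

lemma borel_measurable_divide_continuous:
  fixes N D :: "'a::topological_space \<Rightarrow> complex"
  shows "continuous_on UNIV N \<Longrightarrow> continuous_on UNIV D \<Longrightarrow> (\<lambda>x. N x / D x) \<in> borel_measurable borel"
  by (intro borel_measurable_divide borel_measurable_continuous_onI)

lemma weighted_torus_integral:
  fixes p :: "complex \<Rightarrow> complex \<Rightarrow> complex" and g :: "complex \<times> complex \<Rightarrow> complex"
  defines "\<rho> \<equiv> \<lambda>x. 1 / (cmod (p (fst x) (snd x)))\<^sup>2"
  assumes p: "(\<lambda>x. p (fst x) (snd x)) \<in> borel_measurable borel"
    and g: "g \<in> borel_measurable borel"
    and cont: "continuous_on UNIV (\<lambda>x. \<rho> (cis (fst x), cis (snd x)) *\<^sub>R g (cis (fst x), cis (snd x)))"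
  shows "integrable (weighted_torus p) g"
    and "integral\<^sup>L (weighted_torus p) g = integral\<^sup>L torus_measure (\<lambda>x. \<rho> x *\<^sub>R g x)"
proof -
  have \<rho>: "\<rho> \<in> borel_measurable borel" unfolding \<rho>_def using p by measurable
  have W: "weighted_torus p = density torus_measure (\<lambda>x. ennreal (\<rho> x))"
    unfolding weighted_torus_def \<rho>_def ..
  have nonneg: "AE x in torus_measure. 0 \<le> \<rho> x" by (simp add: \<rho>_def)
  have "integrable torus_measure (\<lambda>x. \<rho> x *\<^sub>R g x)"
    by (rule torus_integrable) (use \<rho> g cont in auto)
  then show "integrable (weighted_torus p) g"
    unfolding W by (subst integrable_density) (use g \<rho> nonneg in \<open>auto simp: torus_measure_def\<close>)
  show "integral\<^sup>L (weighted_torus p) g = integral\<^sup>L torus_measure (\<lambda>x. \<rho> x *\<^sub>R g x)"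
    unfolding W by (rule integral_density) (use g \<rho> nonneg in \<open>auto simp: torus_measure_def\<close>)
qed

(* The weighted measure d sigma / |p|^2 of a nonnegative function is at most C whenever
   the function divided by |p|^2 is bounded by C on the torus (sigma is a probability measure). *)
lemma weighted_torus_nn_integral_le:
  fixes p :: "complex \<Rightarrow> complex \<Rightarrow> complex" and f :: "complex \<times> complex \<Rightarrow> real"
  assumes p: "(\<lambda>x. p (fst x) (snd x)) \<in> borel_measurable borel"
    and f: "f \<in> borel_measurable borel"
    and bound: "\<And>z w. cmod z = 1 \<Longrightarrow> cmod w = 1 \<Longrightarrow> f (z, w) / (cmod (p z w))\<^sup>2 \<le> C"
  shows "(\<integral>\<^sup>+ x. ennreal (f x) \<partial>weighted_torus p) \<le> ennreal C"
proof -
  have "(\<integral>\<^sup>+ x. ennreal (f x) \<partial>weighted_torus p)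
      = (\<integral>\<^sup>+ x. ennreal (1 / (cmod (p (fst x) (snd x)))\<^sup>2) * ennreal (f x) \<partial>torus_measure)"
    unfolding weighted_torus_def
    by (rule nn_integral_density) (use p f in \<open>measurable, auto simp: torus_measure_def\<close>)
  also have "\<dots> = (\<integral>\<^sup>+ y. ennreal (1 / (cmod (p (cis (fst y)) (cis (snd y))))\<^sup>2)
        * ennreal (f (cis (fst y), cis (snd y))) \<partial>uniform_measure lborel angle_square)"
    unfolding torus_measure_def
    by (subst nn_integral_distr[OF torus_param_measurable]) (use p f in \<open>auto simp: case_prod_unfold\<close>)
  also have "\<dots> \<le> (\<integral>\<^sup>+ y. ennreal C \<partial>uniform_measure lborel angle_square)"
  proof (rule nn_integral_mono)
    fix y :: "real \<times> real"
    let ?z = "cis (fst y)" and ?w = "cis (snd y)"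
    show "ennreal (1 / (cmod (p ?z ?w))\<^sup>2) * ennreal (f (?z, ?w)) \<le> ennreal C"
    proof (cases "f (?z, ?w) \<ge> 0")
      case True
      have "f (?z, ?w) / (cmod (p ?z ?w))\<^sup>2 \<le> C" by (rule bound) simp_all
      then show ?thesis using True by (simp add: ennreal_mult[symmetric] ennreal_leI)
    qed (simp add: ennreal_neg)
  qed
  also have "\<dots> = ennreal C" using uniform_angle_square_space by (simp only: nn_integral_const) simp
  finally show ?thesis .
qed

lemma torus_bounded:
  fixes g :: "complex \<times> complex \<Rightarrow> 'b::real_normed_vector"
  assumes "continuous_on UNIV g"
  shows "\<exists>C. \<forall>z w. cmod z = 1 \<longrightarrow> cmod w = 1 \<longrightarrow> norm (g (z, w)) \<le> C"
proof -
  let ?T = "sphere (0::complex) 1 \<times> sphere (0::complex) 1"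
  have "compact (g ` ?T)"
    by (intro compact_continuous_image continuous_on_subset[OF assms] compact_Times compact_sphere) auto
  then obtain b where "\<forall>y\<in>g ` ?T. norm y \<le> b" using compact_imp_bounded bounded_pos by metis
  then show ?thesis by (intro exI[of _ b]) auto
qed

lemma torus_lower_bound:
  fixes g :: "complex \<times> complex \<Rightarrow> 'b::real_normed_vector"
  assumes "continuous_on UNIV g" "\<And>z w. cmod z = 1 \<Longrightarrow> cmod w = 1 \<Longrightarrow> g (z, w) \<noteq> 0"
  shows "\<exists>\<mu>>0. \<forall>z w. cmod z = 1 \<longrightarrow> cmod w = 1 \<longrightarrow> \<mu> \<le> norm (g (z, w))"
proof -
  let ?T = "sphere (0::complex) 1 \<times> sphere (0::complex) 1"
  have "\<exists>x\<in>?T. \<forall>y\<in>?T. norm (g x) \<le> norm (g y)"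
    by (intro continuous_attains_inf continuous_on_subset[OF continuous_on_norm[OF assms(1)]]
        compact_Times compact_sphere) (auto intro!: exI[of _ 1])
  then obtain x where x: "x \<in> ?T" "\<forall>y\<in>?T. norm (g x) \<le> norm (g y)" by blast
  have "g x \<noteq> 0" using x(1) assms(2)[of "fst x" "snd x"] by (cases x) auto
  then show ?thesis using x(2) by (intro exI[of _ "norm (g x)"]) auto
qed

section \<open>Polynomials in two variables and the monomial span\<close>

lemma continuous_on_bipoly[continuous_intros]:
  "continuous_on S f \<Longrightarrow> continuous_on S g \<Longrightarrow> continuous_on S (\<lambda>x. bipoly c n m (f x) (g x))"
  unfolding bipoly_def by (intro continuous_intros)

lemma continuous_on_bipoly_refl[continuous_intros]:
  "continuous_on S f \<Longrightarrow> continuous_on S g \<Longrightarrow> continuous_on S (\<lambda>x. bipoly_refl c n m (f x) (g x))"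
  unfolding bipoly_refl_def by (intro continuous_intros)

lemma continuous_on_mono_comb[continuous_intros]:
  "continuous_on S f \<Longrightarrow> continuous_on S (\<lambda>x. mono_comb F a (f x))"
  unfolding mono_comb_def split_def by (intro continuous_intros)

lemma poly_fun_bipoly: "poly_fun (\<lambda>z. bipoly c n m z w)" "poly_fun (\<lambda>w. bipoly c n m z w)"
  unfolding bipoly_def by (intro poly_fun_sum poly_fun_mult poly_fun_const poly_fun_power poly_fun_id)+

lemma poly_fun_mono_comb: "poly_fun (\<lambda>z. mono_comb F a (z, w))" "poly_fun (\<lambda>w. mono_comb F a (z, w))"
  unfolding mono_comb_def split_def fst_conv snd_conv
  by (intro poly_fun_sum poly_fun_mult poly_fun_const poly_fun_power poly_fun_id)+

lemma cnj_power_diff_circle: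
  assumes "cmod z = 1" "i \<le> n"
  shows "cnj z ^ (n - i) = cnj z ^ n * z ^ i"
proof -
  have zz: "cnj z * z = 1" using complex_norm_square[of z] assms(1) by (simp add: mult.commute)
  have "cnj z ^ n * z ^ i = cnj z ^ (n - i) * (cnj z * z) ^ i"
    using assms(2) by (simp add: power_mult_distrib mult_ac flip: power_add)
  then show ?thesis by (simp add: zz)
qed

lemma cnj_bipoly_refl_torus:
  assumes "cmod z = 1" "cmod w = 1"
  shows "cnj (bipoly_refl c n m z w) = cnj z ^ n * cnj w ^ m * bipoly c n m z w"
proof -
  have "cnj (bipoly_refl c n m z w) = (\<Sum>i\<le>n. \<Sum>j\<le>m. c i j * cnj z ^ (n - i) * cnj w ^ (m - j))"
    unfolding bipoly_refl_def by (simp add: cnj_sum)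
  also have "\<dots> = (\<Sum>i\<le>n. \<Sum>j\<le>m. cnj z ^ n * cnj w ^ m * (c i j * z ^ i * w ^ j))"
    by (intro sum.cong refl) (simp add: cnj_power_diff_circle[OF assms(1)] cnj_power_diff_circle[OF assms(2)] mult_ac)
  also have "\<dots> = cnj z ^ n * cnj w ^ m * bipoly c n m z w"
    unfolding bipoly_def by (simp add: sum_distrib_left)
  finally show ?thesis .
qed

definition in_span :: "nat \<Rightarrow> nat \<Rightarrow> (complex \<times> complex \<Rightarrow> complex) \<Rightarrow> bool" where
  "in_span n m f \<longleftrightarrow> (\<exists>F a. finite F \<and> F \<subseteq> idx_set n m \<and> (\<forall>x. f x = mono_comb F a x))"

lemma mono_comb_extend:
  assumes "finite G" "F \<subseteq> G"
  shows "mono_comb F a x = mono_comb G (\<lambda>k. if k \<in> F then a k else 0) x"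
  unfolding mono_comb_def
  by (rule sum.mono_neutral_cong_left[OF assms]) (auto split: prod.splits)

lemma in_span_add:
  assumes "in_span n m f" "in_span n m g"
  shows "in_span n m (\<lambda>x. f x + g x)"
proof -
  obtain F a G b where F: "finite F" "F \<subseteq> idx_set n m" "\<And>x. f x = mono_comb F a x"
    and G: "finite G" "G \<subseteq> idx_set n m" "\<And>x. g x = mono_comb G b x"
    using assms unfolding in_span_def by metis
  define d where "d k = (if k \<in> F then a k else 0) + (if k \<in> G then b k else 0)" for k
  have "f x + g x = mono_comb (F \<union> G) d x" for x
  proof -
    have "f x + g x = mono_comb (F \<union> G) (\<lambda>k. if k \<in> F then a k else 0) x
        + mono_comb (F \<union> G) (\<lambda>k. if k \<in> G then b k else 0) x"
      unfolding F(3) G(3) using F(1) G(1) by (intro arg_cong2[where f="(+)"] mono_comb_extend) auto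
    also have "\<dots> = mono_comb (F \<union> G) d x"
      unfolding mono_comb_def d_def sum.distrib[symmetric]
      by (intro sum.cong refl) (auto simp: distrib_right split: prod.splits)
    finally show ?thesis .
  qed
  then show ?thesis unfolding in_span_def using F G by (intro exI[of _ "F \<union> G"] exI[of _ d]) auto
qed

lemma in_span_scale:
  assumes "in_span n m f"
  shows "in_span n m (\<lambda>x. c * f x)"
proof -
  obtain F a where F: "finite F" "F \<subseteq> idx_set n m" "\<And>x. f x = mono_comb F a x"
    using assms unfolding in_span_def by metis
  have "c * f x = mono_comb F (\<lambda>k. c * a k) x" for x
    unfolding F(3) mono_comb_def by (simp add: sum_distrib_left mult_ac split_def)
  then show ?thesis unfolding in_span_def using F by (intro exI[of _ F] exI[of _ "\<lambda>k. c * a k"]) auto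
qed

lemma in_span_zero: "in_span n m (\<lambda>x. 0)"
  unfolding in_span_def by (intro exI[of _ "{}"]) (auto simp: mono_comb_def)

lemma in_span_diff: "in_span n m f \<Longrightarrow> in_span n m g \<Longrightarrow> in_span n m (\<lambda>x. f x - g x)"
  using in_span_add[of n m f "\<lambda>x. (-1) * g x"] in_span_scale[of n m g "-1"] by simp

lemma in_span_sum:
  "finite A \<Longrightarrow> (\<And>k. k \<in> A \<Longrightarrow> in_span n m (f k)) \<Longrightarrow> in_span n m (\<lambda>x. \<Sum>k\<in>A. f k x)"
  by (induction A rule: finite_induct) (auto intro: in_span_zero in_span_add)

lemma in_span_monomial: "\<not> (n \<le> i \<and> m \<le> j) \<Longrightarrow> in_span n m (\<lambda>x. fst x ^ i * snd x ^ j)"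
  unfolding in_span_def
  by (intro exI[of _ "{(i, j)}"] exI[of _ "\<lambda>_. 1"]) (auto simp: mono_comb_def idx_set_def)

section \<open>Decomposition of the kernel and uniform approximation on the torus\<close>

definition geom_sum :: "nat \<Rightarrow> complex \<Rightarrow> complex" where
  "geom_sum k x = (\<Sum>t<k. x ^ t)"

lemma geom_sum_eq: "(1 - x) * geom_sum k x = 1 - x ^ k"
  unfolding geom_sum_def by (rule one_diff_power_eq[symmetric])

lemma geom_sum_error: "x \<noteq> 1 \<Longrightarrow> 1 / (1 - x) - geom_sum L x = x ^ L / (1 - x)"
  using geom_sum_eq[of x L] by (simp add: field_simps)

lemma geom_sum_product:
  "(c::complex) * geom_sum A x * geom_sum B y = (\<Sum>t<A. \<Sum>l<B. c * x ^ t * y ^ l)"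
  unfolding geom_sum_def by (simp only: sum_distrib_left sum_distrib_right mult.assoc) (rule sum.swap)

(* The two quotients in the reduction of z^a w^b modulo 1 - al z and 1 - be w. *)
definition quot_z :: "complex \<Rightarrow> nat \<Rightarrow> nat \<Rightarrow> nat \<Rightarrow> complex \<Rightarrow> complex \<Rightarrow> complex" where
  "quot_z al n a b z w = z ^ a * w ^ b * geom_sum (n - a) (al * z)"

definition quot_w :: "complex \<Rightarrow> complex \<Rightarrow> nat \<Rightarrow> nat \<Rightarrow> nat \<Rightarrow> nat \<Rightarrow> complex \<Rightarrow> complex \<Rightarrow> complex" where
  "quot_w al be n m a b z w = z ^ n * al ^ (n - a) * w ^ b * geom_sum (m - b) (be * w)"

lemma monomial_reduction:
  assumes "a \<le> n" "b \<le> m"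
  shows "z ^ a * w ^ b = (1 - al * z) * quot_z al n a b z w + (1 - be * w) * quot_w al be n m a b z w
           + al ^ (n - a) * be ^ (m - b) * z ^ n * w ^ m"
proof -
  have zn: "z ^ n = z ^ a * z ^ (n - a)" and wm: "w ^ m = w ^ b * w ^ (m - b)"
    using assms by (simp_all flip: power_add)
  have "(1 - al * z) * quot_z al n a b z w = z ^ a * w ^ b * (1 - (al * z) ^ (n - a))"
    unfolding quot_z_def by (simp add: geom_sum_eq[symmetric] mult_ac)
  moreover have "(1 - be * w) * quot_w al be n m a b z w
      = z ^ n * al ^ (n - a) * w ^ b * (1 - (be * w) ^ (m - b))"
    unfolding quot_w_def by (simp add: geom_sum_eq[symmetric] mult_ac)
  ultimately show ?thesis
    unfolding zn wm power_mult_distrib by (simp add: ring_distribs mult_ac)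
qed

(* Multiplied by a truncated geometric series in the other variable, both quotients stay
   in the span: quot_z only has z-degrees below n, quot_w only w-degrees below m. *)
lemma in_span_quot_z: "in_span n m (\<lambda>x. quot_z al n a b (fst x) (snd x) * geom_sum L (be * snd x))"
proof -
  have "(\<lambda>x. quot_z al n a b (fst x) (snd x) * geom_sum L (be * snd x))
      = (\<lambda>x. \<Sum>t<n - a. \<Sum>l<L. (al ^ t * be ^ l) * (fst x ^ (a + t) * snd x ^ (b + l)))"
    unfolding quot_z_def mult.assoc[symmetric] geom_sum_product
    by (intro ext sum.cong refl) (simp add: power_add power_mult_distrib mult_ac)
  moreover have "in_span n m (\<lambda>x. \<Sum>t<n - a. \<Sum>l<L. (al ^ t * be ^ l) * (fst x ^ (a + t) * snd x ^ (b + l)))"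
    by (intro in_span_sum in_span_scale in_span_monomial) auto
  ultimately show ?thesis by simp
qed

lemma in_span_quot_w: "in_span n m (\<lambda>x. quot_w al be n m a b (fst x) (snd x) * geom_sum L (al * fst x))"
proof -
  have "(\<lambda>x. quot_w al be n m a b (fst x) (snd x) * geom_sum L (al * fst x))
      = (\<lambda>x. \<Sum>u<m - b. \<Sum>t<L. (al ^ (n - a) * be ^ u * al ^ t) * (fst x ^ (n + t) * snd x ^ (b + u)))"
    unfolding quot_w_def mult.assoc[symmetric] geom_sum_product
    by (intro ext sum.cong refl) (simp add: power_add power_mult_distrib mult_ac)
  moreover have "in_span n m (\<lambda>x. \<Sum>u<m - b. \<Sum>t<L. (al ^ (n - a) * be ^ u * al ^ t) * (fst x ^ (n + t) * snd x ^ (b + u)))"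
    by (intro in_span_sum in_span_scale in_span_monomial) auto
  ultimately show ?thesis by simp
qed

lemma one_minus_mult_nonzero: "cmod u \<le> 1 \<Longrightarrow> cmod v < 1 \<Longrightarrow> 1 - u * v \<noteq> 0"
proof
  assume u: "cmod u \<le> 1" and v: "cmod v < 1" and "1 - u * v = 0"
  have "cmod u * cmod v \<le> cmod v" by (rule mult_left_le_one_le) (use u in auto)
  then have "cmod (u * v) < 1" using v by (simp add: norm_mult)
  with \<open>1 - u * v = 0\<close> show False by simp
qed

lemma geom_remainder_bound:
  fixes N x :: complex
  assumes "norm N \<le> C" "norm x = r" "r < 1"
  shows "norm (N * x ^ L / (1 - x)) \<le> C * r ^ L / (1 - r)"
proof -
  have r0: "0 \<le> r" using assms(2) by auto
  have denom: "1 - r \<le> norm (1 - x)" using norm_triangle_ineq2[of 1 x] assms(2) by simp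
  have "norm (N * x ^ L / (1 - x)) = norm N * r ^ L / norm (1 - x)"
    using assms(2) by (simp add: norm_mult norm_divide norm_power)
  also have "\<dots> \<le> C * r ^ L / (1 - r)"
    by (rule frac_le) (use assms r0 denom in \<open>auto intro!: mult_mono mult_nonneg_nonneg order_trans[OF norm_ge_zero assms(1)]\<close>)
  finally show ?thesis .
qed

context
  fixes c :: "nat \<Rightarrow> nat \<Rightarrow> complex" and n m :: nat and z1 w1 :: complex
begin

definition kernel :: "complex \<Rightarrow> complex \<Rightarrow> complex" where
  "kernel z w = (bipoly c n m z w * cnj (bipoly c n m z1 w1) - bipoly_refl c n m z w * cnj (bipoly_refl c n m z1 w1))
                / ((1 - z * cnj z1) * (1 - w * cnj w1))"

definition conj_p1 :: complex where "conj_p1 = cnj (bipoly c n m z1 w1)"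
definition conj_q1 :: complex where "conj_q1 = cnj (bipoly_refl c n m z1 w1)"

(* The two quotients of the numerator of the kernel, obtained by applying
   monomial_reduction to every monomial of p and p~ with al = conj z1, be = conj w1. *)
definition num_z :: "complex \<Rightarrow> complex \<Rightarrow> complex" where
  "num_z z w = (\<Sum>i\<le>n. \<Sum>j\<le>m. c i j * conj_p1 * quot_z (cnj z1) n i j z w
              - cnj (c i j) * conj_q1 * quot_z (cnj z1) n (n - i) (m - j) z w)"

definition num_w :: "complex \<Rightarrow> complex \<Rightarrow> complex" where
  "num_w z w = (\<Sum>i\<le>n. \<Sum>j\<le>m. c i j * conj_p1 * quot_w (cnj z1) (cnj w1) n m i j z w
              - cnj (c i j) * conj_q1 * quot_w (cnj z1) (cnj w1) n m (n - i) (m - j) z w)"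

(* The remainders of the reduction are multiples of z^n w^m; their coefficients add up to
   conj(p1) conj(q1) - conj(q1) conj(p1) = 0. *)
lemma remainders_cancel:
  "(\<Sum>i\<le>n. \<Sum>j\<le>m. c i j * conj_p1 * cnj z1 ^ (n - i) * cnj w1 ^ (m - j)
      - cnj (c i j) * conj_q1 * cnj z1 ^ i * cnj w1 ^ j) = 0"
proof -
  have q: "conj_q1 = (\<Sum>i\<le>n. \<Sum>j\<le>m. c i j * cnj z1 ^ (n - i) * cnj w1 ^ (m - j))"
    unfolding conj_q1_def bipoly_refl_def by (simp add: cnj_sum)
  have p: "conj_p1 = (\<Sum>i\<le>n. \<Sum>j\<le>m. cnj (c i j) * cnj z1 ^ i * cnj w1 ^ j)"
    unfolding conj_p1_def bipoly_def by (simp add: cnj_sum)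
  have "(\<Sum>i\<le>n. \<Sum>j\<le>m. c i j * conj_p1 * cnj z1 ^ (n - i) * cnj w1 ^ (m - j)
      - cnj (c i j) * conj_q1 * cnj z1 ^ i * cnj w1 ^ j)
      = conj_p1 * (\<Sum>i\<le>n. \<Sum>j\<le>m. c i j * cnj z1 ^ (n - i) * cnj w1 ^ (m - j))
        - conj_q1 * (\<Sum>i\<le>n. \<Sum>j\<le>m. cnj (c i j) * cnj z1 ^ i * cnj w1 ^ j)"
    by (simp add: sum_subtractf sum_distrib_left mult_ac)
  also have "\<dots> = 0" by (simp flip: p q)
  finally show ?thesis .
qed

lemma kernel_numerator_decomp:
  "bipoly c n m z w * conj_p1 - bipoly_refl c n m z w * conj_q1
     = (1 - cnj z1 * z) * num_z z w + (1 - cnj w1 * w) * num_w z w"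
proof -
  let ?al = "cnj z1" and ?be = "cnj w1"
  have reduced_term: "c i j * conj_p1 * (z ^ i * w ^ j) - cnj (c i j) * conj_q1 * (z ^ (n - i) * w ^ (m - j))
     = (1 - ?al * z) * (c i j * conj_p1 * quot_z ?al n i j z w - cnj (c i j) * conj_q1 * quot_z ?al n (n - i) (m - j) z w)
     + (1 - ?be * w) * (c i j * conj_p1 * quot_w ?al ?be n m i j z w - cnj (c i j) * conj_q1 * quot_w ?al ?be n m (n - i) (m - j) z w)
     + (c i j * conj_p1 * ?al ^ (n - i) * ?be ^ (m - j) - cnj (c i j) * conj_q1 * ?al ^ i * ?be ^ j) * (z ^ n * w ^ m)"
    if "i \<le> n" "j \<le> m" for i j
  proof -
    have "n - (n - i) = i" "m - (m - j) = j" using that by auto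
    then have reflected: "z ^ (n - i) * w ^ (m - j) = (1 - ?al * z) * quot_z ?al n (n - i) (m - j) z w
       + (1 - ?be * w) * quot_w ?al ?be n m (n - i) (m - j) z w + ?al ^ i * ?be ^ j * z ^ n * w ^ m"
      using monomial_reduction[of "n - i" n "m - j" m z w ?al ?be] by simp
    show ?thesis
      unfolding monomial_reduction[OF that, of z w ?al ?be] reflected by (simp add: algebra_simps)
  qed
  have "bipoly c n m z w * conj_p1 - bipoly_refl c n m z w * conj_q1
      = (\<Sum>i\<le>n. \<Sum>j\<le>m. c i j * conj_p1 * (z ^ i * w ^ j) - cnj (c i j) * conj_q1 * (z ^ (n - i) * w ^ (m - j)))"
    unfolding bipoly_def bipoly_refl_def
    by (simp add: sum_subtractf sum_distrib_right sum_distrib_left mult_ac)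
  also have "\<dots> = (\<Sum>i\<le>n. \<Sum>j\<le>m.
       (1 - ?al * z) * (c i j * conj_p1 * quot_z ?al n i j z w - cnj (c i j) * conj_q1 * quot_z ?al n (n - i) (m - j) z w)
     + (1 - ?be * w) * (c i j * conj_p1 * quot_w ?al ?be n m i j z w - cnj (c i j) * conj_q1 * quot_w ?al ?be n m (n - i) (m - j) z w)
     + (c i j * conj_p1 * ?al ^ (n - i) * ?be ^ (m - j) - cnj (c i j) * conj_q1 * ?al ^ i * ?be ^ j) * (z ^ n * w ^ m))"
    by (intro sum.cong refl reduced_term) auto
  also have "\<dots> = (1 - ?al * z) * num_z z w + (1 - ?be * w) * num_w z w
     + (\<Sum>i\<le>n. \<Sum>j\<le>m. c i j * conj_p1 * ?al ^ (n - i) * ?be ^ (m - j) - cnj (c i j) * conj_q1 * ?al ^ i * ?be ^ j) * (z ^ n * w ^ m)"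
    unfolding num_z_def num_w_def by (simp only: sum.distrib sum_distrib_left sum_distrib_right)
  also have "\<dots> = (1 - ?al * z) * num_z z w + (1 - ?be * w) * num_w z w"
    by (simp only: remainders_cancel) simp
  finally show ?thesis .
qed

lemma continuous_on_num_z: "continuous_on UNIV (\<lambda>x. num_z (fst x) (snd x))"
  unfolding num_z_def quot_z_def geom_sum_def by (intro continuous_intros)

lemma continuous_on_num_w: "continuous_on UNIV (\<lambda>x. num_w (fst x) (snd x))"
  unfolding num_w_def quot_w_def geom_sum_def by (intro continuous_intros)

lemma in_span_num_z: "in_span n m (\<lambda>x. num_z (fst x) (snd x) * geom_sum L (cnj w1 * snd x))"
proof -
  have "(\<lambda>x. num_z (fst x) (snd x) * geom_sum L (cnj w1 * snd x)) = (\<lambda>x. \<Sum>i\<le>n. \<Sum>j\<le>m.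
      (c i j * conj_p1) * (quot_z (cnj z1) n i j (fst x) (snd x) * geom_sum L (cnj w1 * snd x))
      - (cnj (c i j) * conj_q1) * (quot_z (cnj z1) n (n - i) (m - j) (fst x) (snd x) * geom_sum L (cnj w1 * snd x)))"
    unfolding num_z_def by (simp only: sum_distrib_right left_diff_distrib mult.assoc)
  moreover have "in_span n m \<dots>"
    by (intro in_span_sum in_span_diff in_span_scale in_span_quot_z) auto
  ultimately show ?thesis by simp
qed

lemma in_span_num_w: "in_span n m (\<lambda>x. num_w (fst x) (snd x) * geom_sum L (cnj z1 * fst x))"
proof -
  have "(\<lambda>x. num_w (fst x) (snd x) * geom_sum L (cnj z1 * fst x)) = (\<lambda>x. \<Sum>i\<le>n. \<Sum>j\<le>m.
      (c i j * conj_p1) * (quot_w (cnj z1) (cnj w1) n m i j (fst x) (snd x) * geom_sum L (cnj z1 * fst x))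
      - (cnj (c i j) * conj_q1) * (quot_w (cnj z1) (cnj w1) n m (n - i) (m - j) (fst x) (snd x) * geom_sum L (cnj z1 * fst x)))"
    unfolding num_w_def by (simp only: sum_distrib_right left_diff_distrib mult.assoc)
  moreover have "in_span n m \<dots>"
    by (intro in_span_sum in_span_diff in_span_scale in_span_quot_w) auto
  ultimately show ?thesis by simp
qed

lemma kernel_split:
  assumes "1 - cnj z1 * z \<noteq> 0" "1 - cnj w1 * w \<noteq> 0"
  shows "kernel z w = num_z z w / (1 - cnj w1 * w) + num_w z w / (1 - cnj z1 * z)"
  using kernel_numerator_decomp[of z w] assms
  unfolding kernel_def conj_p1_def conj_q1_def by (simp add: field_simps)

(* Truncating both geometric series after L terms gives an element of the span, and the
   error is geometrically small uniformly on the torus. *)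
lemma kernel_uniform_approx:
  assumes z1: "cmod z1 < 1" and w1: "cmod w1 < 1" and eta: "\<eta> > 0"
  shows "\<exists>f. in_span n m f \<and> (\<forall>z w. cmod z = 1 \<longrightarrow> cmod w = 1 \<longrightarrow> cmod (kernel z w - f (z, w)) \<le> \<eta>)"
proof -
  obtain Cz where Cz: "\<And>z w. cmod z = 1 \<Longrightarrow> cmod w = 1 \<Longrightarrow> norm (num_z z w) \<le> Cz"
    using torus_bounded[OF continuous_on_num_z] by auto
  obtain Cw where Cw: "\<And>z w. cmod z = 1 \<Longrightarrow> cmod w = 1 \<Longrightarrow> norm (num_w z w) \<le> Cw"
    using torus_bounded[OF continuous_on_num_w] by auto
  define rz where "rz = cmod z1"
  define rw where "rw = cmod w1"
  have rz: "rz < 1" "0 \<le> rz" and rw: "rw < 1" "0 \<le> rw" using z1 w1 by (auto simp: rz_def rw_def)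
  have "(\<lambda>L. Cz * rw ^ L / (1 - rw) + Cw * rz ^ L / (1 - rz)) \<longlonglongrightarrow> Cz * 0 / (1 - rw) + Cw * 0 / (1 - rz)"
    using rz rw by (intro tendsto_intros LIMSEQ_power_zero) auto
  then have "eventually (\<lambda>L. Cz * rw ^ L / (1 - rw) + Cw * rz ^ L / (1 - rz) < \<eta>) sequentially"
    using eta by (intro order_tendstoD(2)) auto
  then obtain L where L: "Cz * rw ^ L / (1 - rw) + Cw * rz ^ L / (1 - rz) < \<eta>"
    by (auto simp: eventually_sequentially)
  define f where "f x = num_z (fst x) (snd x) * geom_sum L (cnj w1 * snd x)
                      + num_w (fst x) (snd x) * geom_sum L (cnj z1 * fst x)" for x
  have "cmod (kernel z w - f (z, w)) \<le> \<eta>" if z: "cmod z = 1" and w: "cmod w = 1" for z w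
  proof -
    have nz: "norm (cnj z1 * z) = rz" and nw: "norm (cnj w1 * w) = rw"
      using z w by (simp_all add: norm_mult rz_def rw_def)
    then have "cnj z1 * z \<noteq> 1" "cnj w1 * w \<noteq> 1" using rz rw by auto
    then have "kernel z w - f (z, w)
        = num_z z w * (1 / (1 - cnj w1 * w) - geom_sum L (cnj w1 * w))
          + num_w z w * (1 / (1 - cnj z1 * z) - geom_sum L (cnj z1 * z))"
      unfolding f_def by (subst kernel_split) (auto simp: algebra_simps)
    also have "\<dots> = num_z z w * (cnj w1 * w) ^ L / (1 - cnj w1 * w) + num_w z w * (cnj z1 * z) ^ L / (1 - cnj z1 * z)"
      using \<open>cnj z1 * z \<noteq> 1\<close> \<open>cnj w1 * w \<noteq> 1\<close> by (simp add: geom_sum_error)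
    also have "cmod \<dots> \<le> Cz * rw ^ L / (1 - rw) + Cw * rz ^ L / (1 - rz)"
      by (rule order_trans[OF norm_triangle_ineq add_mono])
         (intro geom_remainder_bound Cz Cw z w nz nw rz rw)+
    finally show ?thesis using L by simp
  qed
  moreover have "in_span n m f" unfolding f_def by (intro in_span_add in_span_num_z in_span_num_w)
  ultimately show ?thesis by blast
qed

section \<open>The kernel lies in the closure of the span\<close>

lemma kernel_measurable: "(\<lambda>x. kernel (fst x) (snd x)) \<in> borel_measurable borel"
  unfolding kernel_def by (intro borel_measurable_divide_continuous continuous_intros)

(* Uniform approximation on the torus, with |p| bounded below there, gives approximation
   in L^2(d sigma / |p|^2). *)
lemma kernel_L2_approx:
  assumes stable: "stable2 (bipoly c n m)" and z1: "cmod z1 < 1" and w1: "cmod w1 < 1"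
    and eps: "\<epsilon> > 0"
  shows "\<exists>F a. finite F \<and> F \<subseteq> idx_set n m \<and>
           (\<integral>\<^sup>+ x. ennreal ((cmod (kernel (fst x) (snd x) - mono_comb F a x))\<^sup>2) \<partial>weighted_torus (bipoly c n m))
             < ennreal \<epsilon>"
proof -
  have p_cont: "continuous_on UNIV (\<lambda>x. bipoly c n m (fst x) (snd x))"
    by (intro continuous_intros)
  obtain \<mu> where mu: "\<mu> > 0" "\<And>z w. cmod z = 1 \<Longrightarrow> cmod w = 1 \<Longrightarrow> \<mu> \<le> cmod (bipoly c n m z w)"
    using torus_lower_bound[OF p_cont] stable unfolding stable2_def by force
  define \<eta> where "\<eta> = \<mu> * sqrt (\<epsilon> / 2)"
  have eta: "\<eta> > 0" using mu eps by (simp add: \<eta>_def)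
  obtain f where f: "in_span n m f"
    and close: "\<And>z w. cmod z = 1 \<Longrightarrow> cmod w = 1 \<Longrightarrow> cmod (kernel z w - f (z, w)) \<le> \<eta>"
    using kernel_uniform_approx[OF z1 w1 eta] by blast
  obtain F a where F: "finite F" "F \<subseteq> idx_set n m" "\<And>x. f x = mono_comb F a x"
    using f unfolding in_span_def by blast
  have "(\<integral>\<^sup>+ x. ennreal ((cmod (kernel (fst x) (snd x) - mono_comb F a x))\<^sup>2) \<partial>weighted_torus (bipoly c n m))
      \<le> ennreal (\<epsilon> / 2)"
  proof (rule weighted_torus_nn_integral_le)
    show "(\<lambda>x. bipoly c n m (fst x) (snd x)) \<in> borel_measurable borel"
      by (rule borel_measurable_continuous_onI[OF p_cont])
    show "(\<lambda>x. (cmod (kernel (fst x) (snd x) - mono_comb F a x))\<^sup>2) \<in> borel_measurable borel"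
      using kernel_measurable borel_measurable_continuous_onI[OF continuous_on_mono_comb[OF continuous_on_id]]
      by measurable
    fix z w :: complex assume z: "cmod z = 1" and w: "cmod w = 1"
    have "(cmod (kernel z w - mono_comb F a (z, w)))\<^sup>2 / (cmod (bipoly c n m z w))\<^sup>2 \<le> \<eta>\<^sup>2 / \<mu>\<^sup>2"
      using close[OF z w] mu(1) mu(2)[OF z w] unfolding F(3)
      by (intro frac_le power_mono) auto
    also have "\<dots> = \<epsilon> / 2" using mu eps by (simp add: \<eta>_def power_mult_distrib)
    finally show "(cmod (kernel (fst (z, w)) (snd (z, w)) - mono_comb F a (z, w)))\<^sup>2 / (cmod (bipoly c n m z w))\<^sup>2 \<le> \<epsilon> / 2"
      by simp
  qed
  also have "\<dots> < ennreal \<epsilon>" using eps by (simp add: ennreal_lessI)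
  finally show ?thesis using F(1,2) by blast
qed

section \<open>The reproducing property\<close>

context
  assumes stable: "stable2 (bipoly c n m)" and z1: "cmod z1 < 1" and w1: "cmod w1 < 1"
begin

lemma bipoly_nonzero: "cmod z \<le> 1 \<Longrightarrow> cmod w \<le> 1 \<Longrightarrow> bipoly c n m z w \<noteq> 0"
  using stable unfolding stable2_def by auto

lemma torus_nonzero [simp]:
  "bipoly c n m (cis s) (cis t) \<noteq> 0"
  "cnj (cis s) * z1 \<noteq> 1" "cis s * cnj z1 \<noteq> 1" "cnj (cis s) * w1 \<noteq> 1" "cis s * cnj w1 \<noteq> 1"
  using bipoly_nonzero[of "cis s" "cis t"] z1 w1
    one_minus_mult_nonzero[of "cnj (cis s)" z1] one_minus_mult_nonzero[of "cis s" "cnj z1"]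
    one_minus_mult_nonzero[of "cnj (cis s)" w1] one_minus_mult_nonzero[of "cis s" "cnj w1"]
  by auto

(* On the torus, f conj(K) / |p|^2 = p(z1,w1) f / (p (1 - conj z z1)(1 - conj w w1))
   - p~(z1,w1) conj(conj f z^n w^m / (p (1 - z conj z1)(1 - w conj w1))),
   using conj(p~) = conj(z)^n conj(w)^m p on the torus. *)
lemma weighted_integrand_split:
  assumes z: "cmod z = 1" and w: "cmod w = 1"
  shows "(1 / (cmod (bipoly c n m z w))\<^sup>2) *\<^sub>R (f * cnj (kernel z w))
    = bipoly c n m z1 w1 * (f / (bipoly c n m z w * ((1 - cnj z * z1) * (1 - cnj w * w1))))
      - bipoly_refl c n m z1 w1 * cnj (cnj f * z ^ n * w ^ m / (bipoly c n m z w * ((1 - z * cnj z1) * (1 - w * cnj w1))))"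
proof -
  define p0 where "p0 = bipoly c n m z w"
  define D where "D = (1 - cnj z * z1) * (1 - cnj w * w1)"
  have p0: "p0 \<noteq> 0" unfolding p0_def using bipoly_nonzero z w by auto
  have D: "D \<noteq> 0" unfolding D_def using one_minus_mult_nonzero z w z1 w1 by simp
  have weight: "(1 / (cmod p0)\<^sup>2) *\<^sub>R X = X / (p0 * cnj p0)" for X
    by (simp add: scaleR_conv_of_real complex_norm_square[symmetric] divide_inverse mult.commute of_real_inverse)
  have cnj_refl: "cnj (bipoly_refl c n m z w) = cnj z ^ n * cnj w ^ m * p0"
    unfolding p0_def by (rule cnj_bipoly_refl_torus[OF z w])
  have kernel: "cnj (kernel z w)
      = (cnj p0 * bipoly c n m z1 w1 - (cnj z ^ n * cnj w ^ m) * p0 * bipoly_refl c n m z1 w1) / D"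
    unfolding kernel_def D_def p0_def[symmetric] by (simp add: cnj_refl mult_ac)
  have reflected: "cnj (cnj f * z ^ n * w ^ m / (p0 * ((1 - z * cnj z1) * (1 - w * cnj w1))))
      = f * (cnj z ^ n * cnj w ^ m) / (cnj p0 * D)"
    unfolding D_def by (simp add: mult_ac)
  have field: "f * ((cp * P - X * p * Q) / D) / (p * cp) = P * (f / (p * D)) - Q * (f * X / (cp * D))"
    if "p \<noteq> 0" "cp \<noteq> 0" for cp P X p Q :: complex
    using that D by (simp add: field_simps)
  show ?thesis
    unfolding p0_def[symmetric] D_def[symmetric] weight kernel reflected
    by (rule field[OF p0]) (use p0 in simp)
qed

(* The main term: Cauchy's formula in both variables. *)
lemma torus_integral_cauchy_term:
  "integral\<^sup>L torus_measure (\<lambda>x. mono_comb F a x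
      / (bipoly c n m (fst x) (snd x) * ((1 - cnj (fst x) * z1) * (1 - cnj (snd x) * w1))))
   = mono_comb F a (z1, w1) / bipoly c n m z1 w1"
  (is "integral\<^sup>L torus_measure ?g = _")
proof -
  let ?h = "\<lambda>z w. mono_comb F a (z, w) / bipoly c n m z w"
  have gm: "?g \<in> borel_measurable borel"
    by (intro borel_measurable_divide_continuous continuous_intros)
  have gc: "continuous_on UNIV (\<lambda>x. ?g (cis (fst x), cis (snd x)))"
    by (auto intro!: continuous_intros)
  have "circ_integral (\<lambda>t. circ_integral (\<lambda>s. ?h (cis s) (cis t)
           / ((1 - cnj (cis s) * z1) * (1 - cnj (cis t) * w1)))) = 2 * pi * (2 * pi * ?h z1 w1)"
  proof (rule circ_integral_cauchy2[OF _ _ z1 w1])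
    show "wiener (\<lambda>z. ?h z w)" if "cmod w = 1" for w
      using that bipoly_nonzero by (intro wiener_rational poly_fun_mono_comb poly_fun_bipoly) auto
    show "wiener (\<lambda>w. ?h z1 w)"
      using z1 bipoly_nonzero by (intro wiener_rational poly_fun_mono_comb poly_fun_bipoly) auto
  qed
  then show ?thesis
    by (simp add: torus_integral_iterated'[OF gm gc] divide_divide_eq_left power2_eq_square)
qed

(* A reflected term conj(z^i w^j) z^n w^m / (p ...) with (i, j) in the index set has
   vanishing integral: some variable still occurs with a positive power, so integrate in
   that variable first. *)
lemma torus_integral_reflected_monomial:
  assumes "(i, j) \<in> idx_set n m"
  shows "integral\<^sup>L torus_measure (\<lambda>x. b * cnj (fst x) ^ i * cnj (snd x) ^ j * fst x ^ n * snd x ^ m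
           / (bipoly c n m (fst x) (snd x) * ((1 - fst x * cnj z1) * (1 - snd x * cnj w1)))) = 0"
    (is "integral\<^sup>L torus_measure ?T = 0")
proof -
  have Tm: "?T \<in> borel_measurable borel"
    by (intro borel_measurable_divide_continuous continuous_intros)
  have Tc: "continuous_on UNIV (\<lambda>x. ?T (cis (fst x), cis (snd x)))"
    by (auto intro!: continuous_intros)
  let ?h = "\<lambda>z w. b / (bipoly c n m z w * ((1 - z * cnj z1) * (1 - w * cnj w1)))"
  have h_nonzero: "bipoly c n m z w * ((1 - z * cnj z1) * (1 - w * cnj w1)) \<noteq> 0"
    if "cmod z \<le> 1" "cmod w \<le> 1" for z w
    using that bipoly_nonzero one_minus_mult_nonzero[of z "cnj z1"] one_minus_mult_nonzero[of w "cnj w1"] z1 w1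
    by auto
  consider "i < n" | "j < m" using assms by (auto simp: idx_set_def)
  then show ?thesis
  proof cases
    case 1
    have inner: "circ_integral (\<lambda>s. ?T (cis s, w)) = 0" if w: "cmod w = 1" for w
    proof -
      have "wiener (\<lambda>z. cnj w ^ j * w ^ m * ?h z w)"
        using h_nonzero w
        by (intro wiener_mult wiener_const wiener_rational poly_fun_const poly_fun_mult poly_fun_diff
              poly_fun_bipoly poly_fun_id) auto
      from circ_integral_conj_power_vanishes[OF 1 this] show ?thesis
        by (simp add: mult_ac)
    qed
    have "(\<lambda>t. circ_integral (\<lambda>s. ?T (cis s, cis t))) = (\<lambda>t. 0)"
      by (rule ext, rule inner) simp
    then show ?thesis unfolding torus_integral_iterated'[OF Tm Tc] by (simp add: circ_integral_def)
  next
    case 2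
    have inner: "circ_integral (\<lambda>t. ?T (z, cis t)) = 0" if z: "cmod z = 1" for z
    proof -
      have "wiener (\<lambda>w. cnj z ^ i * z ^ n * ?h z w)"
        using h_nonzero z
        by (intro wiener_mult wiener_const wiener_rational poly_fun_const poly_fun_mult poly_fun_diff
              poly_fun_bipoly poly_fun_id) auto
      from circ_integral_conj_power_vanishes[OF 2 this] show ?thesis
        by (simp add: mult_ac)
    qed
    have "(\<lambda>s. circ_integral (\<lambda>t. ?T (cis s, cis t))) = (\<lambda>s. 0)"
      by (rule ext, rule inner) simp
    then show ?thesis unfolding torus_integral_iterated[OF Tm Tc] by (simp add: circ_integral_def)
  qed
qed

lemma torus_integral_reflected_term:
  assumes F: "finite F" "F \<subseteq> idx_set n m"
  shows "integral\<^sup>L torus_measure (\<lambda>x. cnj (mono_comb F a x) * fst x ^ n * snd x ^ m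
           / (bipoly c n m (fst x) (snd x) * ((1 - fst x * cnj z1) * (1 - snd x * cnj w1)))) = 0"
proof -
  define T where "T k x = cnj (a k) * cnj (fst x) ^ fst k * cnj (snd x) ^ snd k * fst x ^ n * snd x ^ m
      / (bipoly c n m (fst x) (snd x) * ((1 - fst x * cnj z1) * (1 - snd x * cnj w1)))" for k x
  have "(\<lambda>x. cnj (mono_comb F a x) * fst x ^ n * snd x ^ m
           / (bipoly c n m (fst x) (snd x) * ((1 - fst x * cnj z1) * (1 - snd x * cnj w1))))
      = (\<lambda>x. \<Sum>k\<in>F. T k x)"
    unfolding T_def mono_comb_def
    by (simp add: cnj_sum split_def sum_distrib_right sum_divide_distrib)
  moreover have "integral\<^sup>L torus_measure (\<lambda>x. \<Sum>k\<in>F. T k x) = (\<Sum>k\<in>F. integral\<^sup>L torus_measure (T k))"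
  proof (rule Bochner_Integration.integral_sum)
    show "integrable torus_measure (T k)" for k
      unfolding T_def
      by (rule torus_integrable) (intro borel_measurable_divide_continuous continuous_intros, auto intro!: continuous_intros)
  qed
  moreover have "integral\<^sup>L torus_measure (T k) = 0" if "k \<in> F" for k
  proof -
    have "(fst k, snd k) \<in> idx_set n m" using that F(2) by auto
    then show ?thesis unfolding T_def by (rule torus_integral_reflected_monomial)
  qed
  ultimately show ?thesis by simp
qed

lemma kernel_reproduces:
  assumes F: "finite F" "F \<subseteq> idx_set n m"
  shows "integrable (weighted_torus (bipoly c n m)) (\<lambda>x. mono_comb F a x * cnj (kernel (fst x) (snd x)))"
    and "integral\<^sup>L (weighted_torus (bipoly c n m)) (\<lambda>x. mono_comb F a x * cnj (kernel (fst x) (snd x)))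
           = mono_comb F a (z1, w1)"
proof -
  let ?f = "\<lambda>x. mono_comb F a x * cnj (kernel (fst x) (snd x))"
  let ?\<rho> = "\<lambda>x. 1 / (cmod (bipoly c n m (fst x) (snd x)))\<^sup>2"
  define g1 where "g1 x = mono_comb F a x
      / (bipoly c n m (fst x) (snd x) * ((1 - cnj (fst x) * z1) * (1 - cnj (snd x) * w1)))" for x
  define g2 where "g2 x = cnj (mono_comb F a x) * fst x ^ n * snd x ^ m
      / (bipoly c n m (fst x) (snd x) * ((1 - fst x * cnj z1) * (1 - snd x * cnj w1)))" for x
  define H where "H x = bipoly c n m z1 w1 * g1 x - bipoly_refl c n m z1 w1 * cnj (g2 x)" for x
  have p: "(\<lambda>x. bipoly c n m (fst x) (snd x)) \<in> borel_measurable borel"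
    by (intro borel_measurable_continuous_onI continuous_intros)
  have f: "?f \<in> borel_measurable borel"
    using kernel_measurable borel_measurable_continuous_onI[OF continuous_on_mono_comb[OF continuous_on_id]]
    by measurable
  have cont: "continuous_on UNIV (\<lambda>x. ?\<rho> (cis (fst x), cis (snd x)) *\<^sub>R ?f (cis (fst x), cis (snd x)))"
    unfolding kernel_def by (auto intro!: continuous_intros)
  show "integrable (weighted_torus (bipoly c n m)) ?f"
    by (rule weighted_torus_integral(1)[OF p f cont])
  have g1: "g1 \<in> borel_measurable borel" "continuous_on UNIV (\<lambda>x. g1 (cis (fst x), cis (snd x)))"
    and g2: "g2 \<in> borel_measurable borel" "continuous_on UNIV (\<lambda>x. g2 (cis (fst x), cis (snd x)))"
    unfolding g1_def g2_def
    by (auto intro!: borel_measurable_divide_continuous continuous_intros)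
  have H: "H \<in> borel_measurable borel" "continuous_on UNIV (\<lambda>x. H (cis (fst x), cis (snd x)))"
    unfolding H_def using g1 g2 by (measurable, auto intro!: continuous_intros)
  have "integral\<^sup>L (weighted_torus (bipoly c n m)) ?f = integral\<^sup>L torus_measure (\<lambda>x. ?\<rho> x *\<^sub>R ?f x)"
    by (rule weighted_torus_integral(2)[OF p f cont])
  also have "\<dots> = integral\<^sup>L torus_measure H"
  proof -
    have pointwise: "?\<rho> (cis s, cis t) *\<^sub>R ?f (cis s, cis t) = H (cis s, cis t)" for s t
      unfolding H_def g1_def g2_def using weighted_integrand_split[of "cis s" "cis t"] by simp
    have weighted: "(\<lambda>x. ?\<rho> x *\<^sub>R ?f x) \<in> borel_measurable borel" using p f by measurable
    show ?thesis
      unfolding torus_integral_iterated[OF weighted cont] torus_integral_iterated[OF H] pointwise ..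
  qed
  also have "\<dots> = bipoly c n m z1 w1 * integral\<^sup>L torus_measure g1
      - bipoly_refl c n m z1 w1 * cnj (integral\<^sup>L torus_measure g2)"
    unfolding H_def using torus_integrable[OF g1] torus_integrable[OF g2] by simp
  also have "\<dots> = mono_comb F a (z1, w1)"
    using torus_integral_cauchy_term torus_integral_reflected_term[OF F] bipoly_nonzero z1 w1
    unfolding g1_def g2_def by simp
  finally show "integral\<^sup>L (weighted_torus (bipoly c n m)) ?f = mono_comb F a (z1, w1)" .
qed

end

end

theorem mainTheorem8:
  fixes c :: "nat \<Rightarrow> nat \<Rightarrow> complex" and n m :: nat and z1 w1 :: complex
    and K :: "complex \<times> complex \<Rightarrow> complex"
  assumes "n \<ge> 1" and "m \<ge> 1"
    and "\<exists>j\<le>m. c n j \<noteq> 0" and "\<exists>i\<le>n. c i m \<noteq> 0"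
    and "stable2 (bipoly c n m)"
    and "cmod z1 < 1" and "cmod w1 < 1"
    and "K = (\<lambda>x. (bipoly c n m (fst x) (snd x) * cnj (bipoly c n m z1 w1)
                   - bipoly_refl c n m (fst x) (snd x) * cnj (bipoly_refl c n m z1 w1))
                  / ((1 - fst x * cnj z1) * (1 - snd x * cnj w1)))"
  shows "(\<forall>\<epsilon>>0. \<exists>F a. finite F \<and> F \<subseteq> idx_set n m \<and>
            (\<integral>\<^sup>+ x. ennreal ((cmod (K x - mono_comb F a x))\<^sup>2) \<partial>weighted_torus (bipoly c n m))
              < ennreal \<epsilon>)
       \<and> (\<forall>F a. finite F \<and> F \<subseteq> idx_set n m \<longrightarrow>
            integrable (weighted_torus (bipoly c n m)) (\<lambda>x. mono_comb F a x * cnj (K x)) \<and>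
            mono_comb F a (z1, w1) =
              integral\<^sup>L (weighted_torus (bipoly c n m)) (\<lambda>x. mono_comb F a x * cnj (K x)))"
proof -
  have K: "K = (\<lambda>x. kernel c n m z1 w1 (fst x) (snd x))"
    using assms(8) by (simp add: kernel_def)
  show ?thesis
    unfolding K
    using kernel_L2_approx[OF assms(5-7)] kernel_reproduces[OF assms(5-7)] by auto
qed

end
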